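(* The kernel of the augmentation homomorphism $\varepsilon:\Lambda(\mathbb{Q}\mathrm{Par})=\Lambda_0(\mathbb{Q}\mathrm{Par})\to L_0$ is an abelian Lie algebra.
   Context: The nonsymmetric operad of partitions $\mathrm{Par}$: $\mathrm{Par}((0))=\emptyset$, $\mathrm{Par}((1))=\{1\}$, and for $m\ge2$, $\mathrm{Par}((m))$ is the set of monomials $\prod_{i=1}^Nx_i^{a_i}$ with $N\ge2$, all $a_i\ge1$, $\sum a_i=m$. Partial composition: if $a_1+\dots+a_{l-1}+1\le s\le a_1+\dots+a_l$, then $\left(\prod_{i=1}^Nx_i^{a_i}\right)\circ_s\left(\prod_{k=1}^{N_s}x_k^{b_k}\right)=x_l^{a_l-1+\sum_kb_k}\prod_{i\ne l}x_i^{a_i}$; $1$ is a two-sided unit. $\Lambda(\mathbb{Q}\mathrm{Par})=\Lambda_0(\mathbb{Q}\mathrm{Par})=\bigoplus_{m\ge1}\mathbb{Q}\mathrm{Par}((m))$ with Lie bracket $[c,d]=\sum_{t=1}^{j}d\circ_tc-\sum_{s=1}^{k}c\circ_sd$ for $c\in\mathrm{Par}((k))$, $d\in\mathrm{Par}((j))$. $L_0=x\mathbb{Q}[x]\frac{d}{dx}$ with the usual bracket of vector fields; the augmentation $\varepsilon$ is the Lie algebra homomorphism sending every element of $\mathrm{Par}((m))$ to $x^m\frac{d}{dx}$ (so $\sum a_cc\mapsto(\sum a_c)x^m\frac{d}{dx}$). *)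

theory Defs
  imports "HOL-Computational_Algebra.Polynomial"
begin

text \<open>An element of Par((m)) is encoded as the exponent list [a_1,...,a_N] of the
monomial x_1^a_1 ... x_N^a_N (N >= 2, all a_i >= 1, arity m = a_1+...+a_N);
the unit 1 in Par((1)) is encoded as the list [1].\<close>

definition is_par :: "nat list \<Rightarrow> bool" where
  "is_par c \<longleftrightarrow> c = [1] \<or> (length c \<ge> 2 \<and> (\<forall>a\<in>set c. a \<ge> 1))"

definition arity :: "nat list \<Rightarrow> nat" where
  "arity c = sum_list c"

definition Par :: "nat \<Rightarrow> nat list set" where
  "Par m = {c. is_par c \<and> arity c = m}"

text \<open>Partial composition c o_s d (s in 1..arity c). Index l is 0-based here:
the least l with s <= a_1+...+a_(l+1).\<close>
definition pcomp :: "nat list \<Rightarrow> nat \<Rightarrow> nat list \<Rightarrow> nat list" where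
  "pcomp c s d =
     (if c = [1] then d
      else let l = (LEAST l. s \<le> sum_list (take (Suc l) c))
           in c[l := c ! l - 1 + sum_list d])"

definition QPar :: "(nat list \<Rightarrow> rat) set" where
  "QPar = {f. finite {c. f c \<noteq> 0} \<and> (\<forall>c. f c \<noteq> 0 \<longrightarrow> is_par c)}"

definition supp :: "(nat list \<Rightarrow> rat) \<Rightarrow> nat list set" where
  "supp f = {c. f c \<noteq> 0}"

text \<open>Bilinear extension of [c,d] = sum_t d o_t c - sum_s c o_s d.\<close>
definition bracket :: "(nat list \<Rightarrow> rat) \<Rightarrow> (nat list \<Rightarrow> rat) \<Rightarrow> (nat list \<Rightarrow> rat)" where
  "bracket f g = (\<lambda>p. \<Sum>c\<in>supp f. \<Sum>d\<in>supp g. f c * g d *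
      (of_nat (card {t\<in>{1..arity d}. pcomp d t c = p})
       - of_nat (card {s\<in>{1..arity c}. pcomp c s d = p})))"

text \<open>L_0 = x Q[x] d/dx; the vector field P(x) d/dx is represented by the polynomial P.
The augmentation sends c in Par((m)) to x^m d/dx.\<close>
definition augmentation :: "(nat list \<Rightarrow> rat) \<Rightarrow> rat poly" where
  "augmentation f = (\<Sum>c\<in>supp f. monom (f c) (arity c))"

end

theory Submission
  imports Defs
begin

text \<open>Away from the unit, a partial composition c \<circ>_s d depends on d only through its arity.
An element of the kernel of the augmentation has vanishing coefficient sum in every arity;
since Par((1)) is just the unit, it has no unit component. Hence each of the two sums making up
the bracket is a combination, with weights depending only on arities, of the coefficients of one
argument, and such a combination vanishes.\<close>

lemma finite_supp_QPar: "f \<in> QPar \<Longrightarrow> finite (supp f)"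
  by (simp add: QPar_def supp_def)

lemma is_par_supp_QPar: "f \<in> QPar \<Longrightarrow> c \<in> supp f \<Longrightarrow> is_par c"
  by (simp add: QPar_def supp_def)

lemma coeff_augmentation:
  assumes "f \<in> QPar"
  shows "coeff (augmentation f) m = (\<Sum>c\<in>{c\<in>supp f. arity c = m}. f c)"
proof -
  have "coeff (augmentation f) m = (\<Sum>c\<in>supp f. if arity c = m then f c else 0)"
    unfolding augmentation_def by (simp add: coeff_sum coeff_monom eq_commute)
  then show ?thesis
    using finite_supp_QPar[OF assms] by (simp add: sum.inter_filter)
qed

lemma sum_arity_weighted_eq_0:
  assumes "f \<in> QPar" "augmentation f = 0"
  shows "(\<Sum>c\<in>supp f. f c * h (arity c)) = 0"
proof -
  have "(\<Sum>c\<in>supp f. f c * h (arity c))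
      = (\<Sum>m\<in>arity ` supp f. \<Sum>c\<in>{c\<in>supp f. arity c = m}. f c * h (arity c))"
    using finite_supp_QPar[OF assms(1)] by (intro sum.group[symmetric]) auto
  also have "\<dots> = (\<Sum>m\<in>arity ` supp f. h m * coeff (augmentation f) m)"
    by (intro sum.cong refl)
       (simp add: coeff_augmentation[OF assms(1)] sum_distrib_left mult.commute)
  also have "\<dots> = 0"
    using assms(2) by simp
  finally show ?thesis .
qed

lemma length_le_sum_list: "\<forall>a\<in>set xs. (a::nat) \<ge> 1 \<Longrightarrow> length xs \<le> sum_list xs"
  by (induction xs) auto

lemma Par_1: "Par 1 = {[1]}"
proof (intro equalityI subsetI)
  fix c assume "c \<in> Par 1"
  then show "c \<in> {[1]}"
    using length_le_sum_list[of c] by (auto simp: Par_def is_par_def arity_def)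
qed (simp add: Par_def is_par_def arity_def)

lemma unit_notin_supp_kernel:
  assumes "f \<in> QPar" "augmentation f = 0"
  shows "[1] \<notin> supp f"
proof
  assume unit: "[1] \<in> supp f"
  have "{c\<in>supp f. arity c = 1} = {[1]}"
    using Par_1 is_par_supp_QPar[OF assms(1)] unit by (auto simp: Par_def arity_def)
  then have "f [1] = 0"
    using coeff_augmentation[OF assms(1), of 1] assms(2) by simp
  with unit show False by (simp add: supp_def)
qed

definition pcomp_arity :: "nat list \<Rightarrow> nat \<Rightarrow> nat \<Rightarrow> nat list" where
  "pcomp_arity c s n = (let l = (LEAST l. s \<le> sum_list (take (Suc l) c)) in c[l := c ! l - 1 + n])"

lemma pcomp_eq_pcomp_arity: "c \<noteq> [1] \<Longrightarrow> pcomp c s d = pcomp_arity c s (arity d)"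
  by (simp add: pcomp_def pcomp_arity_def arity_def)

definition comp_count :: "nat list \<Rightarrow> nat \<Rightarrow> nat list \<Rightarrow> rat" where
  "comp_count c n p = of_nat (card {s\<in>{1..arity c}. pcomp_arity c s n = p})"

lemma bracket_eq_comp_count_sums:
  assumes "[1] \<notin> supp f" "[1] \<notin> supp g"
  shows "bracket f g p = (\<Sum>d\<in>supp g. g d * (\<Sum>c\<in>supp f. f c * comp_count d (arity c) p))
                        - (\<Sum>c\<in>supp f. f c * (\<Sum>d\<in>supp g. g d * comp_count c (arity d) p))"
proof -
  have "bracket f g p = (\<Sum>c\<in>supp f. \<Sum>d\<in>supp g.
          f c * g d * (comp_count d (arity c) p - comp_count c (arity d) p))"
    unfolding bracket_def comp_count_def
  proof (intro sum.cong refl)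
    fix c d assume "c \<in> supp f" "d \<in> supp g"
    then have "c \<noteq> [1]" "d \<noteq> [1]" using assms by auto
    then show "f c * g d * (of_nat (card {t\<in>{1..arity d}. pcomp d t c = p})
                         - of_nat (card {s\<in>{1..arity c}. pcomp c s d = p}))
             = f c * g d * (of_nat (card {t\<in>{1..arity d}. pcomp_arity d t (arity c) = p})
                         - of_nat (card {s\<in>{1..arity c}. pcomp_arity c s (arity d) = p}))"
      by (simp add: pcomp_eq_pcomp_arity)
  qed
  also have "\<dots> = (\<Sum>c\<in>supp f. \<Sum>d\<in>supp g. f c * g d * comp_count d (arity c) p)
                - (\<Sum>c\<in>supp f. \<Sum>d\<in>supp g. f c * g d * comp_count c (arity d) p)"
    by (simp add: right_diff_distrib sum_subtractf)
  also have "(\<Sum>c\<in>supp f. \<Sum>d\<in>supp g. f c * g d * comp_count d (arity c) p)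
           = (\<Sum>d\<in>supp g. g d * (\<Sum>c\<in>supp f. f c * comp_count d (arity c) p))"
    by (subst sum.swap) (simp add: sum_distrib_left mult_ac)
  also have "(\<Sum>c\<in>supp f. \<Sum>d\<in>supp g. f c * g d * comp_count c (arity d) p)
           = (\<Sum>c\<in>supp f. f c * (\<Sum>d\<in>supp g. g d * comp_count c (arity d) p))"
    by (simp add: sum_distrib_left mult_ac)
  finally show ?thesis .
qed

theorem corollary4p2:
  assumes "f \<in> QPar" and "g \<in> QPar"
    and "augmentation f = 0" and "augmentation g = 0"
  shows "bracket f g = (\<lambda>_. 0)"
proof
  fix p
  have "(\<Sum>c\<in>supp f. f c * comp_count d (arity c) p) = 0" for d
    by (rule sum_arity_weighted_eq_0[OF assms(1,3)])
  moreover have "(\<Sum>d\<in>supp g. g d * comp_count c (arity d) p) = 0" for c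
    by (rule sum_arity_weighted_eq_0[OF assms(2,4)])
  ultimately show "bracket f g p = 0"
    using bracket_eq_comp_count_sums[OF unit_notin_supp_kernel[OF assms(1,3)]
                                        unit_notin_supp_kernel[OF assms(2,4)]]
    by simp
qed

end
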